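(* Let $\theta>0$, $n\in\mathbb{N}$, let $a_1,\dots,a_n\in\mathbb{R}$ and $h(\sigma)=\sum_{j\le n}a_jk_j(\sigma)$ for $\sigma\in\mathbf{S}_n$. Then for every $k\in\mathbb{N}$, \[ \mathbf{E}_n h(\sigma)_{(k)}=\sum_{u=1}^k\theta^u\sum_{\substack{r_1+\cdots+r_u=k\\ r_i\ge1}}\binom{k-1}{r_1-1}\binom{k-r_1-1}{r_2-1}\cdots\binom{k-r_1-\cdots-r_{u-1}-1}{r_u-1}\sum_{\substack{j_1,\dots,j_u\ge1\\ j_1+\cdots+j_u\le n}}\frac{(a_{j_1})_{(r_1)}\cdots(a_{j_u})_{(r_u)}}{j_1\cdots j_u}\,\psi_n\big(n-(j_1+\cdots+j_u)\big). \]
   Context: $\mathbf{S}_n$ is the symmetric group; $k_j(\sigma)$ is the number of cycles of length $j$ of $\sigma$ and $w(\sigma)$ its number of cycles. The Ewens measure is $\nu_n(A)=\frac{1}{\theta^{(n)}}\sum_{\sigma\in A}\theta^{w(\sigma)}$, $\theta^{(n)}=\theta(\theta+1)\cdots(\theta+n-1)$ ($\theta^{(0)}=1$), and $\mathbf{E}_n$ denotes expectation with respect to $\nu_n$. $x_{(r)}=x(x-1)\cdots(x-r+1)$. For $0\le m\le n$, $\psi_n(m):=\frac{n!}{\theta^{(n)}}\cdot\frac{\theta^{(m)}}{m!}$. *)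

theory Defs
  imports "HOL-Analysis.Analysis" "HOL-Combinatorics.Combinatorics"
begin

definition Sn :: "nat \<Rightarrow> (nat \<Rightarrow> nat) set" where
  "Sn n = {\<sigma>. \<sigma> permutes {1..n}}"

definition cycles_of :: "nat \<Rightarrow> (nat \<Rightarrow> nat) \<Rightarrow> nat set set" where
  "cycles_of n \<sigma> = (\<lambda>x. orbit \<sigma> x) ` {1..n}"

definition kcyc :: "nat \<Rightarrow> nat \<Rightarrow> (nat \<Rightarrow> nat) \<Rightarrow> nat" where
  "kcyc n j \<sigma> = card {c \<in> cycles_of n \<sigma>. card c = j}"

definition wcyc :: "nat \<Rightarrow> (nat \<Rightarrow> nat) \<Rightarrow> nat" where
  "wcyc n \<sigma> = card (cycles_of n \<sigma>)"

text \<open>Expectation under the Ewens measure nu_n with parameter theta;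
  theta^(n) is the rising factorial, pochhammer theta n.\<close>
definition ewens_E :: "real \<Rightarrow> nat \<Rightarrow> ((nat \<Rightarrow> nat) \<Rightarrow> real) \<Rightarrow> real" where
  "ewens_E \<theta> n f = (\<Sum>\<sigma>\<in>Sn n. \<theta> ^ wcyc n \<sigma> * f \<sigma>) / pochhammer \<theta> n"

definition falling :: "real \<Rightarrow> nat \<Rightarrow> real" where
  "falling x r = (\<Prod>i<r. x - real i)"

definition psi :: "real \<Rightarrow> nat \<Rightarrow> nat \<Rightarrow> real" where
  "psi \<theta> n m = (fact n / pochhammer \<theta> n) * (pochhammer \<theta> m / fact m)"

end

theory Submission
  imports Defs "HOL-Computational_Algebra.Formal_Power_Series"
begin

text \<open>Write \<open>h \<sigma> = X\<close> as the sum of \<open>a (card c)\<close> over the cycles \<open>c\<close> of \<open>\<sigma>\<close>. Expanding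
  \<open>falling X k\<close> singles out one cycle \<open>c\<close> carrying a first block of size \<open>r\<close>:
  \<open>falling X k = \<Sum>r. ((k-1) choose (r-1)) * \<Sum>c. falling (a (card c)) r * falling (X - a (card c)) (k-r)\<close>.
  A permutation with a marked cycle \<open>c\<close> is a cyclic permutation of \<open>c\<close> (there are \<open>(card c - 1)!\<close>)
  together with an arbitrary permutation of the complement, whose cycles make up \<open>X - a (card c)\<close>.
  So the unnormalised moment \<open>F n k = \<Sum>\<sigma>. \<theta> ^ w \<sigma> * falling (h \<sigma>) k\<close> satisfies
  \<open>F n k = \<theta> * \<Sum>r j. ((k-1) choose (r-1)) * (n choose j) * (j-1)! * falling (a j) r * F (n-j) (k-r)\<close>,
  while \<open>F n 0 = pochhammer \<theta> n\<close> by the same decomposition at the cycle through a chosen element.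
  Splitting off the first parts \<open>r\<^sub>1\<close> and \<open>j\<^sub>1\<close> shows that the right-hand side of the theorem,
  multiplied by \<open>pochhammer \<theta> n\<close>, obeys the same recursion; induction on \<open>k\<close> concludes.\<close>

section \<open>Decomposing a permutation at one of its cycles\<close>

definition orbits :: "'a set \<Rightarrow> ('a \<Rightarrow> 'a) \<Rightarrow> 'a set set" where
  "orbits S \<sigma> = orbit \<sigma> ` S"

definition cyclic_perms :: "'a set \<Rightarrow> ('a \<Rightarrow> 'a) set" where
  "cyclic_perms c = {\<rho>. \<rho> permutes c \<and> cyclic_on \<rho> c}"

lemma finite_orbits: "finite S \<Longrightarrow> finite (orbits S \<sigma>)"
  by (simp add: orbits_def)

lemma finite_cyclic_perms: "finite c \<Longrightarrow> finite (cyclic_perms c)"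
  by (rule finite_subset[OF _ finite_permutations[of c]]) (auto simp: cyclic_perms_def)

lemma orbit_comp_permutes_disjoint:
  assumes \<rho>: "\<rho> permutes A" and \<tau>: "\<tau> permutes B" and AB: "A \<inter> B = {}"
  shows "x \<in> A \<Longrightarrow> orbit (\<rho> \<circ> \<tau>) x = orbit \<rho> x"
    and "x \<in> B \<Longrightarrow> orbit (\<rho> \<circ> \<tau>) x = orbit \<tau> x"
proof -
  assume "x \<in> A"
  moreover have "\<tau> y = y" if "y \<in> A" for y
    using that AB \<tau> by (meson disjoint_iff permutes_not_in)
  ultimately show "orbit (\<rho> \<circ> \<tau>) x = orbit \<rho> x"
    using \<rho> by (intro orbit_cong0[where A = A, symmetric]) (auto simp: permutes_in_image)
next
  assume "x \<in> B"
  moreover have "\<rho> (\<tau> y) = \<tau> y" if "y \<in> B" for y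
    using that AB \<rho> permutes_in_image[OF \<tau>] by (meson disjoint_iff permutes_not_in)
  ultimately show "orbit (\<rho> \<circ> \<tau>) x = orbit \<tau> x"
    using \<tau> by (intro orbit_cong0[where A = B, symmetric]) (auto simp: permutes_in_image)
qed

lemma orbits_comp_cyclic_perm:
  assumes "c \<subseteq> S" "c \<noteq> {}" and \<rho>: "\<rho> \<in> cyclic_perms c" and \<tau>: "\<tau> permutes (S - c)"
  shows "orbits S (\<rho> \<circ> \<tau>) = insert c (orbits (S - c) \<tau>)"
proof -
  have \<rho>c: "\<rho> permutes c" and cyc: "cyclic_on \<rho> c"
    using \<rho> by (auto simp: cyclic_perms_def)
  have "orbit (\<rho> \<circ> \<tau>) ` c = {c}"
    using orbit_comp_permutes_disjoint(1)[OF \<rho>c \<tau>] orbit_cyclic_eq3[OF cyc] \<open>c \<noteq> {}\<close> by auto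
  moreover have "orbit (\<rho> \<circ> \<tau>) ` (S - c) = orbits (S - c) \<tau>"
    using orbit_comp_permutes_disjoint(2)[OF \<rho>c \<tau>] by (auto simp: orbits_def)
  moreover have "S = c \<union> (S - c)" using \<open>c \<subseteq> S\<close> by auto
  ultimately show ?thesis unfolding orbits_def by (metis image_Un insert_is_Un)
qed

lemma cycle_notin_orbits_Diff:
  assumes "c \<noteq> {}" "\<tau> permutes (S - c)"
  shows "c \<notin> orbits (S - c) \<tau>"
  using assms permutes_orbit_subset[OF assms(2)] by (fastforce simp: orbits_def)

lemma
  assumes "finite S" and \<sigma>: "\<sigma> permutes S" and "c \<in> orbits S \<sigma>"
  shows orbits_subset: "c \<subseteq> S"
    and orbits_nonempty: "c \<noteq> {}"
    and perm_restrict_orbit: "perm_restrict \<sigma> c \<in> cyclic_perms c"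
    and perm_restrict_Diff_orbit: "perm_restrict \<sigma> (S - c) permutes (S - c)"
    and perm_restrict_orbit_comp: "perm_restrict \<sigma> c \<circ> perm_restrict \<sigma> (S - c) = \<sigma>"
proof -
  obtain x where x: "x \<in> S" "c = orbit \<sigma> x" using \<open>c \<in> orbits S \<sigma>\<close> by (auto simp: orbits_def)
  show cS: "c \<subseteq> S" using permutes_orbit_subset[OF \<sigma> x(1)] x by simp
  show "c \<noteq> {}" using x orbit_nonempty[of \<sigma> x] by simp
  have cyc: "cyclic_on \<sigma> c" using cyclic_on_orbit[OF \<sigma> \<open>finite S\<close>] x by simp
  have inj: "inj_on \<sigma> c" using \<sigma> by (meson permutes_inj inj_on_subset subset_UNIV)
  have "\<sigma> ` c \<subseteq> c" using cyclic_on_inI[OF cyc] by auto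
  then have "\<sigma> ` c = c"
    using inj cS \<open>finite S\<close> by (simp add: card_image card_subset_eq finite_subset)
  then have "bij_betw (perm_restrict \<sigma> c) c c"
    using inj by (simp add: bij_betw_def perm_restrict_def inj_on_def image_def)
  then have restr: "perm_restrict \<sigma> c permutes c"
    by (rule bij_imp_permutes) (simp add: perm_restrict_def)
  then show "perm_restrict \<sigma> c \<in> cyclic_perms c"
    using cyc by (simp add: cyclic_perms_def cyclic_on_perm_restrict)
  show restr': "perm_restrict \<sigma> (S - c) permutes (S - c)"
    by (rule perm_restrict_diff_cyclic[OF \<sigma> cyc])
  have "perm_restrict \<sigma> c \<circ> perm_restrict \<sigma> (S - c) = perm_restrict \<sigma> (c \<union> (S - c))"
    by (rule perm_restrict_union[OF restr restr']) auto
  also have "c \<union> (S - c) = S" using cS by auto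
  finally show "perm_restrict \<sigma> c \<circ> perm_restrict \<sigma> (S - c) = \<sigma>"
    using \<sigma> by (simp add: comp_def)
qed

lemma
  assumes "c \<subseteq> S" "\<rho> \<in> cyclic_perms c" and \<tau>: "\<tau> permutes (S - c)"
  shows permutes_comp_cyclic_perm: "(\<rho> \<circ> \<tau>) permutes S"
    and perm_restrict_comp_cyclic_perm: "perm_restrict (\<rho> \<circ> \<tau>) c = \<rho>"
    and perm_restrict_Diff_comp_cyclic_perm: "perm_restrict (\<rho> \<circ> \<tau>) (S - c) = \<tau>"
proof -
  have \<rho>: "\<rho> permutes c" using assms by (simp add: cyclic_perms_def)
  show "(\<rho> \<circ> \<tau>) permutes S"
    using assms \<rho> by (intro permutes_compose) (auto intro: permutes_subset)
  have \<tau>c: "\<tau> x \<notin> c" if "x \<notin> c" for x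
    using that \<tau> by (metis Diff_iff permutes_in_image permutes_not_in)
  have \<tau>_fix: "\<tau> x = x" if "x \<notin> S - c" for x
    using that \<tau> by (rule permutes_not_in[rotated])
  have \<rho>_fix: "\<rho> x = x" if "x \<notin> c" for x
    using that \<rho> by (rule permutes_not_in[rotated])
  show "perm_restrict (\<rho> \<circ> \<tau>) c = \<rho>"
    by (auto simp: fun_eq_iff perm_restrict_def \<tau>_fix \<rho>_fix)
  show "perm_restrict (\<rho> \<circ> \<tau>) (S - c) = \<tau>"
    by (auto simp: fun_eq_iff perm_restrict_def \<tau>_fix \<rho>_fix \<tau>c)
qed

lemma bij_betw_cycle_decomposition:
  assumes "finite S"
  shows "bij_betw (\<lambda>(c, \<rho>, \<tau>). (\<rho> \<circ> \<tau>, c))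
           (SIGMA c:{c. c \<subseteq> S \<and> c \<noteq> {}}. cyclic_perms c \<times> {\<tau>. \<tau> permutes (S - c)})
           (SIGMA \<sigma>:{\<sigma>. \<sigma> permutes S}. orbits S \<sigma>)"
    (is "bij_betw _ ?A ?B")
proof (rule bij_betwI[where g = "\<lambda>(\<sigma>, c). (c, perm_restrict \<sigma> c, perm_restrict \<sigma> (S - c))"])
  show "(\<lambda>(c, \<rho>, \<tau>). (\<rho> \<circ> \<tau>, c)) \<in> ?A \<rightarrow> ?B"
  proof
    fix x assume "x \<in> ?A"
    then obtain c \<rho> \<tau> where x: "x = (c, \<rho>, \<tau>)" "c \<subseteq> S" "c \<noteq> {}" "\<rho> \<in> cyclic_perms c"
      "\<tau> permutes (S - c)" by blast
    then show "(\<lambda>(c, \<rho>, \<tau>). (\<rho> \<circ> \<tau>, c)) x \<in> ?B"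
      using permutes_comp_cyclic_perm[OF x(2,4,5)] orbits_comp_cyclic_perm[OF x(2-5)] by simp
  qed
  show "(\<lambda>(\<sigma>, c). (c, perm_restrict \<sigma> c, perm_restrict \<sigma> (S - c))) \<in> ?B \<rightarrow> ?A"
  proof
    fix y assume "y \<in> ?B"
    then obtain \<sigma> c where y: "y = (\<sigma>, c)" "\<sigma> permutes S" "c \<in> orbits S \<sigma>" by blast
    then show "(\<lambda>(\<sigma>, c). (c, perm_restrict \<sigma> c, perm_restrict \<sigma> (S - c))) y \<in> ?A"
      using orbits_subset[OF assms y(2,3)] orbits_nonempty[OF assms y(2,3)]
        perm_restrict_orbit[OF assms y(2,3)] perm_restrict_Diff_orbit[OF assms y(2,3)]
      by simp
  qed
  show "(\<lambda>(c, \<rho>, \<tau>). (\<rho> \<circ> \<tau>, c)) ((\<lambda>(\<sigma>, c). (c, perm_restrict \<sigma> c, perm_restrict \<sigma> (S - c))) y) = y"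
    if yB: "y \<in> ?B" for y
  proof -
    obtain \<sigma> c where y: "y = (\<sigma>, c)" "\<sigma> permutes S" "c \<in> orbits S \<sigma>" using yB by blast
    then show ?thesis using perm_restrict_orbit_comp[OF assms y(2,3)] by simp
  qed
  show "(\<lambda>(\<sigma>, c). (c, perm_restrict \<sigma> c, perm_restrict \<sigma> (S - c))) ((\<lambda>(c, \<rho>, \<tau>). (\<rho> \<circ> \<tau>, c)) x) = x"
    if xA: "x \<in> ?A" for x
  proof -
    obtain c \<rho> \<tau> where x: "x = (c, \<rho>, \<tau>)" "c \<subseteq> S" "\<rho> \<in> cyclic_perms c" "\<tau> permutes (S - c)"
      using xA by blast
    then show ?thesis
      using perm_restrict_comp_cyclic_perm[OF x(2-4)] perm_restrict_Diff_comp_cyclic_perm[OF x(2-4)]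
      by simp
  qed
qed

lemma sum_perms_orbits:
  assumes "finite S"
  shows "(\<Sum>\<sigma> | \<sigma> permutes S. \<Sum>c\<in>orbits S \<sigma>. G c \<sigma>) =
    (\<Sum>c | c \<subseteq> S \<and> c \<noteq> {}. \<Sum>\<rho>\<in>cyclic_perms c. \<Sum>\<tau> | \<tau> permutes (S - c). G c (\<rho> \<circ> \<tau>))"
proof -
  have fin: "finite {c. c \<subseteq> S \<and> c \<noteq> {}}" "\<And>c. c \<subseteq> S \<Longrightarrow> finite c"
    using assms by (auto intro: finite_subset)
  have "(\<Sum>\<sigma> | \<sigma> permutes S. \<Sum>c\<in>orbits S \<sigma>. G c \<sigma>) = (\<Sum>(\<sigma>, c)\<in>(SIGMA \<sigma>:{\<sigma>. \<sigma> permutes S}. orbits S \<sigma>). G c \<sigma>)"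
    using assms by (intro sum.Sigma) (auto simp: finite_permutations finite_orbits)
  also have "\<dots> = (\<Sum>(c, \<rho>, \<tau>)\<in>(SIGMA c:{c. c \<subseteq> S \<and> c \<noteq> {}}. cyclic_perms c \<times> {\<tau>. \<tau> permutes (S - c)}). G c (\<rho> \<circ> \<tau>))"
    by (subst sum.reindex_bij_betw[OF bij_betw_cycle_decomposition[OF assms], symmetric])
      (simp add: case_prod_unfold)
  also have "\<dots> = (\<Sum>c | c \<subseteq> S \<and> c \<noteq> {}. \<Sum>(\<rho>, \<tau>)\<in>cyclic_perms c \<times> {\<tau>. \<tau> permutes (S - c)}. G c (\<rho> \<circ> \<tau>))"
    using fin assms by (subst sum.Sigma[symmetric])
      (auto simp: finite_cyclic_perms finite_permutations case_prod_unfold)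
  also have "\<dots> = (\<Sum>c | c \<subseteq> S \<and> c \<noteq> {}. \<Sum>\<rho>\<in>cyclic_perms c. \<Sum>\<tau> | \<tau> permutes (S - c). G c (\<rho> \<circ> \<tau>))"
    by (simp add: sum.cartesian_product)
  finally show ?thesis .
qed

lemma orbits_containing:
  assumes "finite S" "\<sigma> permutes S" "x \<in> S"
  shows "{c \<in> orbits S \<sigma>. x \<in> c} = {orbit \<sigma> x}"
proof -
  have perm: "permutation \<sigma>" using assms by (auto simp: permutation_permutes)
  have "c = orbit \<sigma> x" if "c \<in> orbits S \<sigma>" "x \<in> c" for c
    using that cyclic_on_orbit'[OF perm] orbit_cyclic_eq3 by (fastforce simp: orbits_def)
  then show ?thesis
    using assms(3) permutation_self_in_orbit[OF perm] by (auto simp: orbits_def)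
qed

lemma sum_perms_orbit:
  assumes "finite S" "x \<in> S"
  shows "(\<Sum>\<sigma> | \<sigma> permutes S. G (orbit \<sigma> x) \<sigma>) =
    (\<Sum>c | c \<subseteq> S \<and> x \<in> c. \<Sum>\<rho>\<in>cyclic_perms c. \<Sum>\<tau> | \<tau> permutes (S - c). G c (\<rho> \<circ> \<tau>))"
proof -
  have "(\<Sum>\<sigma> | \<sigma> permutes S. G (orbit \<sigma> x) \<sigma>) =
      (\<Sum>\<sigma> | \<sigma> permutes S. \<Sum>c\<in>orbits S \<sigma>. if x \<in> c then G c \<sigma> else 0)"
    using assms by (intro sum.cong refl)
      (simp add: sum.inter_filter[symmetric] finite_orbits orbits_containing)
  also have "\<dots> = (\<Sum>c | c \<subseteq> S \<and> c \<noteq> {}. if x \<in> c then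
      (\<Sum>\<rho>\<in>cyclic_perms c. \<Sum>\<tau> | \<tau> permutes (S - c). G c (\<rho> \<circ> \<tau>)) else 0)"
    unfolding sum_perms_orbits[OF assms(1)] by (intro sum.cong refl) simp
  also have "\<dots> = (\<Sum>c | c \<subseteq> S \<and> x \<in> c. \<Sum>\<rho>\<in>cyclic_perms c. \<Sum>\<tau> | \<tau> permutes (S - c). G c (\<rho> \<circ> \<tau>))"
    using assms by (subst sum.inter_filter[symmetric]) (auto intro: sum.cong)
  finally show ?thesis .
qed

section \<open>Counting cycles\<close>

lemma sum_Pow_card:
  fixes F :: "nat \<Rightarrow> 'b::comm_semiring_1"
  assumes "finite S"
  shows "(\<Sum>c\<in>Pow S. F (card c)) = (\<Sum>j\<le>card S. of_nat (card S choose j) * F j)"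
proof -
  have "(\<Sum>c\<in>Pow S. F (card c)) = (\<Sum>j\<le>card S. \<Sum>c\<in>{c \<in> Pow S. card c = j}. F (card c))"
    by (rule sum.group[symmetric]) (use assms in \<open>auto intro: card_mono\<close>)
  also have "\<dots> = (\<Sum>j\<le>card S. of_nat (card S choose j) * F j)"
  proof (intro sum.cong refl)
    fix j
    have "{c \<in> Pow S. card c = j} = {c. c \<subseteq> S \<and> card c = j}" by auto
    then show "(\<Sum>c\<in>{c \<in> Pow S. card c = j}. F (card c)) = of_nat (card S choose j) * F j"
      using n_subsets[OF assms, of j] by simp
  qed
  finally show ?thesis .
qed

lemma sum_nonempty_subsets_card:
  fixes F :: "nat \<Rightarrow> 'b::comm_semiring_1_cancel"
  assumes "finite S"
  shows "(\<Sum>c | c \<subseteq> S \<and> c \<noteq> {}. F (card c)) = (\<Sum>j=1..card S. of_nat (card S choose j) * F j)"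
proof -
  have "Pow S = insert {} {c. c \<subseteq> S \<and> c \<noteq> {}}" "{..card S} = insert 0 {1..card S}" by auto
  then show ?thesis using sum_Pow_card[OF assms, of F] assms by simp
qed

lemma sum_subsets_containing_card:
  fixes F :: "nat \<Rightarrow> 'b::comm_semiring_1"
  assumes "finite S" "x \<in> S"
  shows "(\<Sum>c | c \<subseteq> S \<and> x \<in> c. F (card c)) =
    (\<Sum>j\<le>card S - 1. of_nat ((card S - 1) choose j) * F (Suc j))"
proof -
  have "bij_betw (insert x) (Pow (S - {x})) {c. c \<subseteq> S \<and> x \<in> c}"
  proof (rule bij_betwI[where g = "\<lambda>c. c - {x}"])
    show "insert x \<in> Pow (S - {x}) \<rightarrow> {c. c \<subseteq> S \<and> x \<in> c}" using assms(2) by auto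
  qed auto
  from sum.reindex_bij_betw[OF this, of "\<lambda>c. F (card c)"]
  have "(\<Sum>c | c \<subseteq> S \<and> x \<in> c. F (card c)) = (\<Sum>c\<in>Pow (S - {x}). F (card (insert x c)))"
    by simp
  also have "\<dots> = (\<Sum>c\<in>Pow (S - {x}). F (Suc (card c)))"
  proof (intro sum.cong refl)
    fix c assume "c \<in> Pow (S - {x})"
    then have "finite c" "x \<notin> c" using assms(1) finite_subset by auto
    then show "F (card (insert x c)) = F (Suc (card c))" by simp
  qed
  also have "\<dots> = (\<Sum>j\<le>card S - 1. of_nat ((card S - 1) choose j) * F (Suc j))"
    using sum_Pow_card[of "S - {x}" "\<lambda>j. F (Suc j)"] assms by simp
  finally show ?thesis .
qed

lemma of_nat_choose_mult_fact:
  assumes "k \<le> n"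
  shows "of_nat (n choose k) * fact k * fact (n - k) = (fact n :: 'a::{comm_semiring_1,semiring_char_0})"
proof -
  have "of_nat (fact k * fact (n - k) * (n choose k)) = (of_nat (fact n) :: 'a)"
    using binomial_fact_lemma[OF assms] by (simp only:)
  then show ?thesis by (simp only: of_nat_mult of_nat_fact mult_ac)
qed

lemma fact_card_eq_sum_cyclic_perms:
  assumes "finite S" "x \<in> S"
  shows "fact (card S) = (\<Sum>c | c \<subseteq> S \<and> x \<in> c. card (cyclic_perms c) * fact (card S - card c))"
proof -
  have "fact (card S) = (\<Sum>\<sigma> | \<sigma> permutes S. 1::nat)"
    using card_permutations[OF refl assms(1)] by simp
  also have "\<dots> = (\<Sum>c | c \<subseteq> S \<and> x \<in> c. \<Sum>\<rho>\<in>cyclic_perms c. \<Sum>\<tau> | \<tau> permutes (S - c). 1)"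
    by (rule sum_perms_orbit[OF assms])
  also have "\<dots> = (\<Sum>c | c \<subseteq> S \<and> x \<in> c. card (cyclic_perms c) * fact (card S - card c))"
  proof (intro sum.cong refl)
    fix c assume "c \<in> {c. c \<subseteq> S \<and> x \<in> c}"
    then have "c \<subseteq> S" "finite c" using assms(1) finite_subset by auto
    then have "card {\<tau>. \<tau> permutes (S - c)} = fact (card S - card c)"
      using assms(1) by (simp add: card_permutations card_Diff_subset)
    then show "(\<Sum>\<rho>\<in>cyclic_perms c. \<Sum>\<tau> | \<tau> permutes (S - c). 1) =
        card (cyclic_perms c) * fact (card S - card c)" by simp
  qed
  finally show ?thesis .
qed

lemma card_cyclic_perms:
  assumes "finite c" "c \<noteq> {}"
  shows "card (cyclic_perms c) = fact (card c - 1)"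
  using assms
proof (induction "card c" arbitrary: c rule: less_induct)
  case less
  define n where "n = card c"
  obtain x where x: "x \<in> c" using less.prems by auto
  have n: "Suc (n - 1) = n" using less.prems by (simp add: n_def card_gt_0_iff)
  \<comment> \<open>By induction every proper subset through \<open>x\<close> contributes \<open>fact (j - 1) * fact (n - j)\<close>;
    these sum to \<open>(n - 1) * fact (n - 1)\<close>, which leaves \<open>fact (n - 1)\<close> for \<open>c\<close> itself.\<close>
  define F where "F j = (if j = n then card (cyclic_perms c) else fact (j - 1) * fact (n - j))" for j
  have "fact n = (\<Sum>d | d \<subseteq> c \<and> x \<in> d. card (cyclic_perms d) * fact (n - card d))"
    unfolding n_def by (rule fact_card_eq_sum_cyclic_perms[OF less.prems(1) x])
  also have "\<dots> = (\<Sum>d | d \<subseteq> c \<and> x \<in> d. F (card d))"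
  proof (intro sum.cong refl)
    fix d assume d: "d \<in> {d. d \<subseteq> c \<and> x \<in> d}"
    then have "finite d" "d \<noteq> {}" using less.prems(1) finite_subset by auto
    moreover have "card d < n" if "d \<noteq> c"
      using d that less.prems(1) psubset_card_mono unfolding n_def by blast
    moreover have "card d \<le> n" using d less.prems(1) by (simp add: card_mono n_def)
    ultimately show "card (cyclic_perms d) * fact (n - card d) = F (card d)"
      using less.hyps[of d] by (cases "d = c") (auto simp: F_def n_def)
  qed
  also have "\<dots> = (\<Sum>j\<le>n - 1. ((n - 1) choose j) * F (Suc j))"
    unfolding n_def using sum_subsets_containing_card[OF less.prems(1) x, of F] by simp
  also have "\<dots> = card (cyclic_perms c) + (\<Sum>j<n - 1. fact (n - 1))"
  proof -
    have "{..n - 1} = insert (n - 1) {..<n - 1}" by auto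
    moreover have "(\<Sum>j<n - 1. ((n - 1) choose j) * F (Suc j)) = (\<Sum>j<n - 1. fact (n - 1))"
      using binomial_fact_lemma[of _ "n - 1"] by (intro sum.cong refl) (auto simp: F_def mult_ac)
    ultimately show ?thesis using n by (simp add: F_def)
  qed
  finally have "fact n = card (cyclic_perms c) + (n - 1) * fact (n - 1)" by simp
  moreover have "fact n = fact (n - 1) + (n - 1) * fact (n - 1)" by (subst n[symmetric]) simp
  ultimately show ?case by (simp add: n_def)
qed

lemma sum_cyclic_perms_comp:
  fixes F :: "'a set set \<Rightarrow> 'b::comm_semiring_1"
  assumes "finite S" "c \<subseteq> S" "c \<noteq> {}"
  shows "(\<Sum>\<rho>\<in>cyclic_perms c. \<Sum>\<tau> | \<tau> permutes (S - c). F (orbits S (\<rho> \<circ> \<tau>))) =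
    of_nat (fact (card c - 1)) * (\<Sum>\<tau> | \<tau> permutes (S - c). F (insert c (orbits (S - c) \<tau>)))"
proof -
  have "finite c" using assms finite_subset by auto
  have "(\<Sum>\<rho>\<in>cyclic_perms c. \<Sum>\<tau> | \<tau> permutes (S - c). F (orbits S (\<rho> \<circ> \<tau>))) =
      (\<Sum>\<rho>\<in>cyclic_perms c. \<Sum>\<tau> | \<tau> permutes (S - c). F (insert c (orbits (S - c) \<tau>)))"
    using assms by (intro sum.cong refl) (simp add: orbits_comp_cyclic_perm)
  then show ?thesis
    using card_cyclic_perms[OF \<open>finite c\<close> \<open>c \<noteq> {}\<close>] by simp
qed

lemma pochhammer_Suc_eq_sum_fact:
  fixes \<theta> :: "'a::field_char_0"
  shows "pochhammer \<theta> (Suc m) = \<theta> * fact m * (\<Sum>i\<le>m. pochhammer \<theta> i / fact i)"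
proof (induction m)
  case (Suc m)
  have "\<theta> * fact (Suc m) * (\<Sum>i\<le>Suc m. pochhammer \<theta> i / fact i)
      = of_nat (Suc m) * (\<theta> * fact m * (\<Sum>i\<le>m. pochhammer \<theta> i / fact i)) + \<theta> * pochhammer \<theta> (Suc m)"
    by (simp add: field_simps del: of_nat_Suc)
  also have "\<dots> = pochhammer \<theta> (Suc (Suc m))"
    by (simp add: Suc.IH pochhammer_Suc[of \<theta> "Suc m"] algebra_simps)
  finally show ?case ..
qed simp

lemma pochhammer_Suc_eq_sum:
  fixes \<theta> :: "'a::field_char_0"
  shows "pochhammer \<theta> (Suc m) = \<theta> * (\<Sum>j\<le>m. of_nat (m choose j) * fact j * pochhammer \<theta> (m - j))"
proof -
  have "(\<Sum>j\<le>m. of_nat (m choose j) * fact j * pochhammer \<theta> (m - j)) =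
      fact m * (\<Sum>j\<le>m. pochhammer \<theta> (m - j) / fact (m - j))"
    unfolding sum_distrib_left
    by (intro sum.cong refl) (simp add: of_nat_choose_mult_fact[symmetric] field_simps)
  also have "(\<Sum>j\<le>m. pochhammer \<theta> (m - j) / fact (m - j)) = (\<Sum>i\<le>m. pochhammer \<theta> i / fact i)"
    using sum.atLeastAtMost_rev[of "\<lambda>i. pochhammer \<theta> i / fact i" 0 m] by (simp add: atLeast0AtMost)
  finally show ?thesis by (simp add: pochhammer_Suc_eq_sum_fact mult_ac)
qed

lemma sum_perms_pow_card_orbits:
  fixes \<theta> :: "'b::field_char_0"
  assumes "finite S"
  shows "(\<Sum>\<sigma> | \<sigma> permutes S. \<theta> ^ card (orbits S \<sigma>)) = pochhammer \<theta> (card S)"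
  using assms
proof (induction "card S" arbitrary: S rule: less_induct)
  case less
  show ?case
  proof (cases "S = {}")
    case True
    then show ?thesis by (simp add: permutes_empty orbits_def)
  next
    case False
    then obtain x where x: "x \<in> S" by auto
    define n where "n = card S"
    have n: "Suc (n - 1) = n" using less.prems False by (simp add: n_def card_gt_0_iff)
    have "(\<Sum>\<sigma> | \<sigma> permutes S. \<theta> ^ card (orbits S \<sigma>)) =
        (\<Sum>c | c \<subseteq> S \<and> x \<in> c. \<Sum>\<rho>\<in>cyclic_perms c. \<Sum>\<tau> | \<tau> permutes (S - c). \<theta> ^ card (orbits S (\<rho> \<circ> \<tau>)))"
      by (rule sum_perms_orbit[OF less.prems x])
    also have "\<dots> = (\<Sum>c | c \<subseteq> S \<and> x \<in> c. fact (card c - 1) * (\<theta> * pochhammer \<theta> (n - card c)))"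
    proof (intro sum.cong refl)
      fix c assume c: "c \<in> {c. c \<subseteq> S \<and> x \<in> c}"
      then have c': "c \<subseteq> S" "c \<noteq> {}" "finite c" using less.prems finite_subset by auto
      have "card c > 0" "card c \<le> n" using c' less.prems by (auto simp: n_def card_gt_0_iff card_mono)
      then have "card (S - c) < n" using c' by (simp add: n_def card_Diff_subset)
      then have IH: "(\<Sum>\<tau> | \<tau> permutes (S - c). \<theta> ^ card (orbits (S - c) \<tau>)) = pochhammer \<theta> (n - card c)"
        using less.hyps[of "S - c"] less.prems c' by (simp add: n_def card_Diff_subset)
      have "(\<Sum>\<tau> | \<tau> permutes (S - c). \<theta> ^ card (insert c (orbits (S - c) \<tau>))) =
          \<theta> * (\<Sum>\<tau> | \<tau> permutes (S - c). \<theta> ^ card (orbits (S - c) \<tau>))"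
        unfolding sum_distrib_left using less.prems c'(2)
        by (intro sum.cong refl) (simp add: cycle_notin_orbits_Diff finite_orbits)
      then show "(\<Sum>\<rho>\<in>cyclic_perms c. \<Sum>\<tau> | \<tau> permutes (S - c). \<theta> ^ card (orbits S (\<rho> \<circ> \<tau>))) =
          fact (card c - 1) * (\<theta> * pochhammer \<theta> (n - card c))"
        using sum_cyclic_perms_comp[OF less.prems c'(1,2), of "\<lambda>C. \<theta> ^ card C"] IH by simp
    qed
    also have "\<dots> = \<theta> * (\<Sum>j\<le>n - 1. of_nat ((n - 1) choose j) * fact j * pochhammer \<theta> (n - 1 - j))"
      using sum_subsets_containing_card[OF less.prems x,
          of "\<lambda>j. fact (j - 1) * (\<theta> * pochhammer \<theta> (n - j))"]
      by (simp add: n_def sum_distrib_left mult_ac)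
    also have "\<dots> = pochhammer \<theta> n"
      using pochhammer_Suc_eq_sum[of \<theta> "n - 1"] n by simp
    finally show ?thesis by (simp add: n_def)
  qed
qed

section \<open>Falling factorials\<close>

lemma falling_0 [simp]: "falling x 0 = 1"
  by (simp add: falling_def)

lemma falling_Suc_left: "falling x (Suc i) = x * falling (x - 1) i"
  unfolding falling_def prod.lessThan_Suc_shift by (simp add: algebra_simps)

lemma falling_eq_fact_gbinomial: "falling x r = fact r * (x gchoose r)"
  by (simp add: falling_def gbinomial_prod_rev atLeast0LessThan)

lemma falling_add:
  "falling (x + y) m = (\<Sum>i\<le>m. of_nat (m choose i) * falling x i * falling y (m - i))"
proof -
  have "falling (x + y) m = fact m * (\<Sum>i\<le>m. (x gchoose i) * (y gchoose (m - i)))"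
    using gbinomial_Vandermonde[of x y m] by (simp add: falling_eq_fact_gbinomial atLeast0AtMost)
  also have "\<dots> = (\<Sum>i\<le>m. of_nat (m choose i) * falling x i * falling y (m - i))"
    unfolding sum_distrib_left by (intro sum.cong refl)
      (simp add: falling_eq_fact_gbinomial of_nat_choose_mult_fact[symmetric] mult_ac)
  finally show ?thesis .
qed

lemma sum_choose_falling_Suc:
  "(\<Sum>r=1..Suc m. of_nat (m choose (r - 1)) * falling x r * falling y (Suc m - r)) =
    x * falling (x + y - 1) m"
proof -
  have "(\<Sum>r=1..Suc m. of_nat (m choose (r - 1)) * falling x r * falling y (Suc m - r)) =
      (\<Sum>i\<le>m. of_nat (m choose i) * falling x (Suc i) * falling y (m - i))"
    using sum.shift_bounds_cl_Suc_ivl[of "\<lambda>r. of_nat (m choose (r - 1)) * falling x r * falling y (Suc m - r)" 0 m]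
    by (simp add: atLeast0AtMost)
  also have "\<dots> = x * falling (x - 1 + y) m"
    by (simp add: falling_Suc_left falling_add sum_distrib_left mult_ac)
  finally show ?thesis by (simp add: algebra_simps)
qed

text \<open>By Vandermonde each \<open>c\<close> contributes \<open>x c * falling (X - 1) (k - 1)\<close>, where
  \<open>X = (\<Sum>c\<in>C. x c)\<close>; these add up to \<open>X * falling (X - 1) (k - 1) = falling X k\<close>.\<close>
lemma falling_sum_split:
  assumes "finite C" "k \<ge> 1"
  shows "falling (\<Sum>c\<in>C. x c) k = (\<Sum>r=1..k. of_nat ((k - 1) choose (r - 1)) *
     (\<Sum>c\<in>C. falling (x c) r * falling (\<Sum>c'\<in>C - {c}. x c') (k - r)))"
proof -
  obtain m where m: "k = Suc m" using assms(2) by (cases k) auto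
  define X where "X = (\<Sum>c\<in>C. x c)"
  have "(\<Sum>r=1..k. of_nat ((k - 1) choose (r - 1)) *
      (\<Sum>c\<in>C. falling (x c) r * falling (\<Sum>c'\<in>C - {c}. x c') (k - r))) =
      (\<Sum>c\<in>C. \<Sum>r=1..k. of_nat ((k - 1) choose (r - 1)) * falling (x c) r * falling (X - x c) (k - r))"
    using assms(1) by (subst sum.swap) (simp add: sum_distrib_left sum_diff1 X_def mult_ac)
  also have "\<dots> = (\<Sum>c\<in>C. x c * falling (x c + (X - x c) - 1) m)"
    by (simp only: m diff_Suc_1 sum_choose_falling_Suc)
  also have "\<dots> = falling X k"
    by (simp add: X_def m falling_Suc_left sum_distrib_right[symmetric])
  finally show ?thesis by (simp add: X_def)
qed

section \<open>The moment as a sum over permutations\<close>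

text \<open>The numerator of the Ewens expectation, for permutations of an arbitrary finite set so that
  it can recurse on the complement of a cycle.\<close>
definition cycle_moment :: "(nat \<Rightarrow> real) \<Rightarrow> real \<Rightarrow> 'a set \<Rightarrow> nat \<Rightarrow> real" where
  "cycle_moment a \<theta> S k =
    (\<Sum>\<sigma> | \<sigma> permutes S. \<theta> ^ card (orbits S \<sigma>) * falling (\<Sum>c\<in>orbits S \<sigma>. a (card c)) k)"

lemma cycle_moment_0: "finite S \<Longrightarrow> cycle_moment a \<theta> S 0 = pochhammer \<theta> (card S)"
  by (simp add: cycle_moment_def sum_perms_pow_card_orbits)

lemma cycle_moment_rec:
  assumes S: "finite S" and k: "k \<ge> 1"
  shows "cycle_moment a \<theta> S k = \<theta> * (\<Sum>r=1..k. of_nat ((k - 1) choose (r - 1)) *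
     (\<Sum>c | c \<subseteq> S \<and> c \<noteq> {}. fact (card c - 1) * falling (a (card c)) r * cycle_moment a \<theta> (S - c) (k - r)))"
proof -
  define G where "G r c (C :: 'a set set) = \<theta> ^ card C * falling (a (card c)) r *
    falling (\<Sum>c'\<in>C - {c}. a (card c')) (k - r)" for r c C
  have "cycle_moment a \<theta> S k = (\<Sum>\<sigma> | \<sigma> permutes S. \<Sum>r=1..k.
      of_nat ((k - 1) choose (r - 1)) * (\<Sum>c\<in>orbits S \<sigma>. G r c (orbits S \<sigma>)))"
    unfolding cycle_moment_def using falling_sum_split[OF finite_orbits[OF S] k]
    by (intro sum.cong refl) (simp add: G_def sum_distrib_left mult_ac)
  also have "\<dots> = (\<Sum>r=1..k. of_nat ((k - 1) choose (r - 1)) *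
      (\<Sum>c | c \<subseteq> S \<and> c \<noteq> {}. \<Sum>\<rho>\<in>cyclic_perms c. \<Sum>\<tau> | \<tau> permutes (S - c). G r c (orbits S (\<rho> \<circ> \<tau>))))"
    by (subst sum.swap) (simp add: sum_distrib_left sum_perms_orbits[OF S])
  also have "\<dots> = (\<Sum>r=1..k. of_nat ((k - 1) choose (r - 1)) * (\<Sum>c | c \<subseteq> S \<and> c \<noteq> {}.
      fact (card c - 1) * (\<theta> * falling (a (card c)) r * cycle_moment a \<theta> (S - c) (k - r))))"
  proof (intro sum.cong refl arg_cong2[where f = "(*)"])
    fix r c assume "c \<in> {c. c \<subseteq> S \<and> c \<noteq> {}}"
    then have c: "c \<subseteq> S" "c \<noteq> {}" by auto
    have "(\<Sum>\<tau> | \<tau> permutes (S - c). G r c (insert c (orbits (S - c) \<tau>))) =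
        \<theta> * falling (a (card c)) r * cycle_moment a \<theta> (S - c) (k - r)"
      unfolding cycle_moment_def sum_distrib_left using S c(2)
      by (intro sum.cong refl) (simp add: G_def cycle_notin_orbits_Diff finite_orbits Diff_insert_absorb)
    then show "(\<Sum>\<rho>\<in>cyclic_perms c. \<Sum>\<tau> | \<tau> permutes (S - c). G r c (orbits S (\<rho> \<circ> \<tau>))) =
        fact (card c - 1) * (\<theta> * falling (a (card c)) r * cycle_moment a \<theta> (S - c) (k - r))"
      using sum_cyclic_perms_comp[OF S c, of "G r c"] by simp
  qed
  finally show ?thesis by (simp add: sum_distrib_left mult_ac)
qed

section \<open>The closed form\<close>

text \<open>Tuples are indexed by \<open>{1..u}\<close>; \<open>fcons x f\<close> is \<open>undefined\<close> at \<open>0\<close> and beyond \<open>Suc u\<close>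
  so that it stays in the extensional function space.\<close>
definition fcons :: "'b \<Rightarrow> (nat \<Rightarrow> 'b) \<Rightarrow> nat \<Rightarrow> 'b" where
  "fcons x f i = (if i = 0 then undefined else if i = 1 then x else f (i - 1))"

lemma fcons_1 [simp]: "fcons x f (Suc 0) = x"
  by (simp add: fcons_def)

lemma fcons_Suc [simp]: "i \<ge> 1 \<Longrightarrow> fcons x f (Suc i) = f i"
  by (simp add: fcons_def)

lemma bij_betw_fcons:
  "bij_betw (\<lambda>(x, f). fcons x f) (A \<times> ({1..u} \<rightarrow>\<^sub>E A)) ({1..Suc u} \<rightarrow>\<^sub>E A)"
proof (rule bij_betwI[where g = "\<lambda>g. (g 1, restrict (\<lambda>i. g (Suc i)) {1..u})"])
  show "(\<lambda>(x, f). fcons x f) \<in> A \<times> ({1..u} \<rightarrow>\<^sub>E A) \<rightarrow> {1..Suc u} \<rightarrow>\<^sub>E A"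
  proof clarify
    fix x f assume x: "x \<in> A" and f: "f \<in> {1..u} \<rightarrow>\<^sub>E A"
    show "fcons x f \<in> {1..Suc u} \<rightarrow>\<^sub>E A"
    proof (rule PiE_I)
      show "fcons x f i \<in> A" if "i \<in> {1..Suc u}" for i
      proof (cases "i = 1")
        case False
        then have "i - 1 \<in> {1..u}" using that by auto
        then show ?thesis using False that PiE_mem[OF f] by (simp add: fcons_def)
      qed (use x in simp)
      show "fcons x f i = undefined" if "i \<notin> {1..Suc u}" for i
      proof -
        have "i - 1 \<notin> {1..u}" using that by auto
        then show ?thesis using that PiE_arb[OF f] by (auto simp: fcons_def)
      qed
    qed
  qed
  show "(\<lambda>g. (g 1, restrict (\<lambda>i. g (Suc i)) {1..u})) \<in> ({1..Suc u} \<rightarrow>\<^sub>E A) \<rightarrow> A \<times> ({1..u} \<rightarrow>\<^sub>E A)"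
    by auto
  show "(\<lambda>g. (g 1, restrict (\<lambda>i. g (Suc i)) {1..u})) ((\<lambda>(x, f). fcons x f) xf) = xf"
    if "xf \<in> A \<times> ({1..u} \<rightarrow>\<^sub>E A)" for xf
    using that by (auto simp: fcons_def PiE_def extensional_def fun_eq_iff)
  show "(\<lambda>(x, f). fcons x f) ((\<lambda>g. (g 1, restrict (\<lambda>i. g (Suc i)) {1..u})) g) = g"
    if "g \<in> {1..Suc u} \<rightarrow>\<^sub>E A" for g
  proof -
    have "fcons (g 1) (restrict (\<lambda>i. g (Suc i)) {1..u}) i = g i" for i
      using that by (cases i) (auto simp: fcons_def PiE_def extensional_def)
    then show ?thesis by (auto simp: fun_eq_iff)
  qed
qed

lemma sum_PiE_fcons:
  fixes F :: "(nat \<Rightarrow> 'b) \<Rightarrow> 'c::comm_monoid_add"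
  assumes "finite A"
  shows "(\<Sum>g\<in>{g \<in> {1..Suc u} \<rightarrow>\<^sub>E A. P g}. F g) =
    (\<Sum>x\<in>A. \<Sum>f\<in>{f \<in> {1..u} \<rightarrow>\<^sub>E A. P (fcons x f)}. F (fcons x f))"
proof -
  let ?D = "SIGMA x:A. {f \<in> {1..u} \<rightarrow>\<^sub>E A. P (fcons x f)}"
  have "?D = {xf \<in> A \<times> ({1..u} \<rightarrow>\<^sub>E A). P ((\<lambda>(x, f). fcons x f) xf)}" by auto
  moreover have "(\<lambda>(x, f). fcons x f) ` {xf \<in> A \<times> ({1..u} \<rightarrow>\<^sub>E A). P ((\<lambda>(x, f). fcons x f) xf)} =
      {g \<in> (\<lambda>(x, f). fcons x f) ` (A \<times> ({1..u} \<rightarrow>\<^sub>E A)). P g}"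
    by auto
  ultimately have "bij_betw (\<lambda>(x, f). fcons x f) ?D {g \<in> {1..Suc u} \<rightarrow>\<^sub>E A. P g}"
    using bij_betw_fcons[of A u] unfolding bij_betw_def by (auto intro: inj_on_subset)
  then have "(\<Sum>g\<in>{g \<in> {1..Suc u} \<rightarrow>\<^sub>E A. P g}. F g) = (\<Sum>(x, f)\<in>?D. F (fcons x f))"
    by (simp add: sum.reindex_bij_betw[symmetric] case_prod_unfold)
  also have "\<dots> = (\<Sum>x\<in>A. \<Sum>f\<in>{f \<in> {1..u} \<rightarrow>\<^sub>E A. P (fcons x f)}. F (fcons x f))"
    using assms by (subst sum.Sigma) (auto simp: finite_PiE)
  finally show ?thesis .
qed

lemma sum_atLeast1_Suc: "(\<Sum>i=1..Suc u. F i) = F 1 + (\<Sum>i=1..u. F (Suc i))"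
  using sum.atLeast_Suc_atMost[of 1 "Suc u" F] sum.shift_bounds_cl_Suc_ivl[of F 1 u] by simp

lemma prod_atLeast1_Suc: "(\<Prod>i=1..Suc u. F i) = F 1 * (\<Prod>i=1..u. F (Suc i))"
  using prod.atLeast_Suc_atMost[of 1 "Suc u" F] prod.shift_bounds_cl_Suc_ivl[of F 1 u] by simp

lemma sum_fcons: "(\<Sum>i=1..Suc u. fcons x f i) = x + (\<Sum>i=1..u. f i :: 'b::comm_monoid_add)"
  unfolding sum_atLeast1_Suc by (simp add: fcons_def)

lemma sum_lessThan_fcons:
  assumes "i \<ge> 1"
  shows "(\<Sum>l=1..<Suc i. fcons x f l) = x + (\<Sum>l=1..<i. f l :: 'b::comm_monoid_add)"
proof -
  obtain j where "i = Suc j" using assms by (cases i) auto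
  then show ?thesis by (simp only: atLeastLessThanSuc_atLeastAtMost sum_fcons)
qed

lemma PiE_bounded_sum_iff:
  fixes f :: "nat \<Rightarrow> nat"
  assumes "x + (\<Sum>i=1..u. f i) \<le> (n::nat)"
  shows "f \<in> {1..u} \<rightarrow>\<^sub>E {1..n} \<longleftrightarrow> f \<in> {1..u} \<rightarrow>\<^sub>E {1..n - x}"
proof -
  have le: "f i \<le> n - x" if "i \<in> {1..u}" for i
  proof -
    have "f i \<le> (\<Sum>i=1..u. f i)" by (rule member_le_sum) (use that in auto)
    then show ?thesis using assms by linarith
  qed
  then have "f i \<le> n" if "i \<in> {1..u}" for i
    using that by (meson diff_le_self le_trans)
  then show ?thesis using le by (auto simp: PiE_iff)
qed

definition compositions :: "nat \<Rightarrow> nat \<Rightarrow> (nat \<Rightarrow> nat) set" where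
  "compositions k u = {r \<in> {1..u} \<rightarrow>\<^sub>E {1..k}. (\<Sum>i=1..u. r i) = k}"

definition length_tuples :: "nat \<Rightarrow> nat \<Rightarrow> (nat \<Rightarrow> nat) set" where
  "length_tuples n u = {J \<in> {1..u} \<rightarrow>\<^sub>E {1..n}. (\<Sum>i=1..u. J i) \<le> n}"

definition composition_coeff :: "nat \<Rightarrow> nat \<Rightarrow> (nat \<Rightarrow> nat) \<Rightarrow> nat" where
  "composition_coeff k u r = (\<Prod>i=1..u. (k - (\<Sum>l=1..<i. r l) - 1) choose (r i - 1))"

text \<open>The summand of the theorem multiplied by \<open>pochhammer \<theta> n\<close>, so that
  \<open>psi \<theta> n m\<close> turns into \<open>n! / m! * pochhammer \<theta> m\<close>.\<close>
definition tuple_weight ::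
    "(nat \<Rightarrow> real) \<Rightarrow> real \<Rightarrow> nat \<Rightarrow> nat \<Rightarrow> (nat \<Rightarrow> nat) \<Rightarrow> (nat \<Rightarrow> nat) \<Rightarrow> real" where
  "tuple_weight a \<theta> n u r J =
    (\<Prod>i=1..u. falling (a (J i)) (r i)) / (\<Prod>i=1..u. real (J i)) *
    (fact n / fact (n - (\<Sum>i=1..u. J i))) * pochhammer \<theta> (n - (\<Sum>i=1..u. J i))"

definition moment_coeff :: "(nat \<Rightarrow> real) \<Rightarrow> real \<Rightarrow> nat \<Rightarrow> nat \<Rightarrow> nat \<Rightarrow> real" where
  "moment_coeff a \<theta> n k u = (\<Sum>r\<in>compositions k u.
    of_nat (composition_coeff k u r) * (\<Sum>J\<in>length_tuples n u. tuple_weight a \<theta> n u r J))"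

text \<open>The right-hand side of the theorem times \<open>pochhammer \<theta> n\<close>, together with a term \<open>u = 0\<close>
  that vanishes for \<open>k \<ge> 1\<close> and gives \<open>pochhammer \<theta> n\<close> for \<open>k = 0\<close>.\<close>
definition closed_moment :: "(nat \<Rightarrow> real) \<Rightarrow> real \<Rightarrow> nat \<Rightarrow> nat \<Rightarrow> real" where
  "closed_moment a \<theta> n k = (\<Sum>u=0..k. \<theta> ^ u * moment_coeff a \<theta> n k u)"

lemma compositions_fcons:
  assumes "r1 \<in> {1..k}"
  shows "{r \<in> {1..u} \<rightarrow>\<^sub>E {1..k}. (\<Sum>i=1..Suc u. fcons r1 r i) = k} = compositions (k - r1) u"
proof (intro set_eqI)
  fix r :: "nat \<Rightarrow> nat"
  have "r1 + (\<Sum>i=1..u. r i) = k \<longleftrightarrow> (\<Sum>i=1..u. r i) = k - r1" using assms by auto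
  then show "r \<in> {r \<in> {1..u} \<rightarrow>\<^sub>E {1..k}. (\<Sum>i=1..Suc u. fcons r1 r i) = k} \<longleftrightarrow>
      r \<in> compositions (k - r1) u"
    unfolding compositions_def mem_Collect_eq sum_fcons
    using PiE_bounded_sum_iff[of r1 r u k] by auto
qed

lemma length_tuples_fcons:
  assumes "j \<in> {1..n}"
  shows "{J \<in> {1..u} \<rightarrow>\<^sub>E {1..n}. (\<Sum>i=1..Suc u. fcons j J i) \<le> n} = length_tuples (n - j) u"
proof (intro set_eqI)
  fix J :: "nat \<Rightarrow> nat"
  have "j + (\<Sum>i=1..u. J i) \<le> n \<longleftrightarrow> (\<Sum>i=1..u. J i) \<le> n - j" using assms by auto
  then show "J \<in> {J \<in> {1..u} \<rightarrow>\<^sub>E {1..n}. (\<Sum>i=1..Suc u. fcons j J i) \<le> n} \<longleftrightarrow>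
      J \<in> length_tuples (n - j) u"
    unfolding length_tuples_def mem_Collect_eq sum_fcons
    using PiE_bounded_sum_iff[of j J u n] by auto
qed

lemma composition_coeff_fcons:
  "composition_coeff k (Suc u) (fcons r1 r) = ((k - 1) choose (r1 - 1)) * composition_coeff (k - r1) u r"
proof -
  have "(\<Prod>i=1..u. (k - (\<Sum>l=1..<Suc i. fcons r1 r l) - 1) choose (fcons r1 r (Suc i) - 1)) =
      composition_coeff (k - r1) u r"
    unfolding composition_coeff_def
    by (intro prod.cong refl) (subst sum_lessThan_fcons, auto simp: diff_diff_left)
  then show ?thesis unfolding composition_coeff_def[of k] prod_atLeast1_Suc by simp
qed

lemma tuple_weight_fcons:
  assumes "j \<in> {1..n}"
  shows "tuple_weight a \<theta> n (Suc u) (fcons r1 r) (fcons j J) =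
    of_nat (n choose j) * fact (j - 1) * falling (a j) r1 * tuple_weight a \<theta> (n - j) u r J"
proof -
  have "fact j = real j * fact (j - 1)" and j: "real j \<noteq> 0"
    using assms by (auto simp: fact_reduce)
  then have fact_n: "fact n = real j * (of_nat (n choose j) * fact (j - 1) * fact (n - j))"
    using of_nat_choose_mult_fact[where 'a = real, of j n] assms by (simp add: mult_ac)
  show ?thesis
    unfolding tuple_weight_def prod_atLeast1_Suc sum_fcons fact_n
    using j by (simp add: field_simps diff_diff_left)
qed

lemma sum_length_tuples_Suc:
  "(\<Sum>J\<in>length_tuples n (Suc u). tuple_weight a \<theta> n (Suc u) (fcons r1 r) J) =
    (\<Sum>j=1..n. of_nat (n choose j) * fact (j - 1) * falling (a j) r1 *
       (\<Sum>J\<in>length_tuples (n - j) u. tuple_weight a \<theta> (n - j) u r J))"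
proof -
  have "(\<Sum>J\<in>length_tuples n (Suc u). tuple_weight a \<theta> n (Suc u) (fcons r1 r) J) =
      (\<Sum>j=1..n. \<Sum>J\<in>{J \<in> {1..u} \<rightarrow>\<^sub>E {1..n}. (\<Sum>i=1..Suc u. fcons j J i) \<le> n}.
         tuple_weight a \<theta> n (Suc u) (fcons r1 r) (fcons j J))"
    unfolding length_tuples_def by (rule sum_PiE_fcons) simp
  also have "\<dots> = (\<Sum>j=1..n. of_nat (n choose j) * fact (j - 1) * falling (a j) r1 *
       (\<Sum>J\<in>length_tuples (n - j) u. tuple_weight a \<theta> (n - j) u r J))"
  proof (intro sum.cong refl)
    fix j assume j: "j \<in> {1..n}"
    show "(\<Sum>J\<in>{J \<in> {1..u} \<rightarrow>\<^sub>E {1..n}. (\<Sum>i=1..Suc u. fcons j J i) \<le> n}.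
          tuple_weight a \<theta> n (Suc u) (fcons r1 r) (fcons j J)) =
        of_nat (n choose j) * fact (j - 1) * falling (a j) r1 *
          (\<Sum>J\<in>length_tuples (n - j) u. tuple_weight a \<theta> (n - j) u r J)"
      unfolding length_tuples_fcons[OF j] tuple_weight_fcons[OF j] sum_distrib_left ..
  qed
  finally show ?thesis .
qed

lemma moment_coeff_Suc:
  "moment_coeff a \<theta> n k (Suc u) = (\<Sum>r1=1..k. of_nat ((k - 1) choose (r1 - 1)) *
     (\<Sum>j=1..n. of_nat (n choose j) * fact (j - 1) * falling (a j) r1 * moment_coeff a \<theta> (n - j) (k - r1) u))"
proof -
  have "moment_coeff a \<theta> n k (Suc u) = (\<Sum>r1=1..k. \<Sum>r\<in>compositions (k - r1) u.
      of_nat (composition_coeff k (Suc u) (fcons r1 r)) *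
      (\<Sum>J\<in>length_tuples n (Suc u). tuple_weight a \<theta> n (Suc u) (fcons r1 r) J))"
    unfolding moment_coeff_def compositions_def[of k "Suc u"]
  proof (subst sum_PiE_fcons, simp, rule sum.cong[OF refl])
    fix r1 assume "r1 \<in> {1..k}"
    then show "(\<Sum>r\<in>{r \<in> {1..u} \<rightarrow>\<^sub>E {1..k}. (\<Sum>i=1..Suc u. fcons r1 r i) = k}.
        of_nat (composition_coeff k (Suc u) (fcons r1 r)) *
        (\<Sum>J\<in>length_tuples n (Suc u). tuple_weight a \<theta> n (Suc u) (fcons r1 r) J)) =
      (\<Sum>r\<in>compositions (k - r1) u. of_nat (composition_coeff k (Suc u) (fcons r1 r)) *
        (\<Sum>J\<in>length_tuples n (Suc u). tuple_weight a \<theta> n (Suc u) (fcons r1 r) J))"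
      by (simp only: compositions_fcons)
  qed
  also have "\<dots> = (\<Sum>r1=1..k. of_nat ((k - 1) choose (r1 - 1)) * (\<Sum>r\<in>compositions (k - r1) u.
      \<Sum>j=1..n. of_nat (n choose j) * fact (j - 1) * falling (a j) r1 *
      (of_nat (composition_coeff (k - r1) u r) *
       (\<Sum>J\<in>length_tuples (n - j) u. tuple_weight a \<theta> (n - j) u r J))))"
    by (simp add: composition_coeff_fcons sum_length_tuples_Suc sum_distrib_left mult_ac)
  also have "\<dots> = (\<Sum>r1=1..k. of_nat ((k - 1) choose (r1 - 1)) *
     (\<Sum>j=1..n. of_nat (n choose j) * fact (j - 1) * falling (a j) r1 * moment_coeff a \<theta> (n - j) (k - r1) u))"
    by (subst sum.swap) (simp add: moment_coeff_def sum_distrib_left)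
  finally show ?thesis .
qed

lemma moment_coeff_0: "moment_coeff a \<theta> n k 0 = (if k = 0 then pochhammer \<theta> n else 0)"
proof -
  have "compositions k 0 = (if k = 0 then {\<lambda>_. undefined} else {})"
    "length_tuples n 0 = {\<lambda>_. undefined}"
    by (auto simp: compositions_def length_tuples_def)
  then show ?thesis by (simp add: moment_coeff_def composition_coeff_def tuple_weight_def)
qed

lemma moment_coeff_eq_0:
  assumes "k < u"
  shows "moment_coeff a \<theta> n k u = 0"
proof -
  have "compositions k u = {}"
  proof (rule ccontr)
    assume "compositions k u \<noteq> {}"
    then obtain r where r: "r \<in> {1..u} \<rightarrow>\<^sub>E {1..k}" "(\<Sum>i=1..u. r i) = k"
      by (auto simp: compositions_def)
    have "(\<Sum>i=1..u. 1::nat) \<le> (\<Sum>i=1..u. r i)"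
      using r(1) by (intro sum_mono) (auto simp: PiE_iff)
    then show False using r(2) assms by simp
  qed
  then show ?thesis by (simp add: moment_coeff_def)
qed

lemma closed_moment_0: "closed_moment a \<theta> n 0 = pochhammer \<theta> n"
  by (simp add: closed_moment_def moment_coeff_0)

lemma closed_moment_eq_sum:
  assumes "k \<le> K"
  shows "(\<Sum>u=0..K. \<theta> ^ u * moment_coeff a \<theta> n k u) = closed_moment a \<theta> n k"
  unfolding closed_moment_def
  by (rule sum.mono_neutral_right) (use assms in \<open>auto simp: moment_coeff_eq_0\<close>)

lemma closed_moment_rec:
  assumes "k \<ge> 1"
  shows "closed_moment a \<theta> n k = \<theta> * (\<Sum>r=1..k. of_nat ((k - 1) choose (r - 1)) *
     (\<Sum>j=1..n. of_nat (n choose j) * fact (j - 1) * falling (a j) r * closed_moment a \<theta> (n - j) (k - r)))"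
proof -
  obtain m where m: "k = Suc m" using assms by (cases k) auto
  have "closed_moment a \<theta> n k = (\<Sum>u=0..m. \<theta> ^ Suc u * moment_coeff a \<theta> n k (Suc u))"
    unfolding closed_moment_def m by (subst sum.atLeast0_atMost_Suc_shift) (simp add: moment_coeff_0)
  also have "\<dots> = (\<Sum>u=0..m. \<Sum>r=1..k. \<Sum>j=1..n. \<theta> * (of_nat ((k - 1) choose (r - 1)) *
      (of_nat (n choose j) * fact (j - 1) * falling (a j) r * (\<theta> ^ u * moment_coeff a \<theta> (n - j) (k - r) u))))"
    by (simp add: moment_coeff_Suc sum_distrib_left mult_ac)
  also have "\<dots> = (\<Sum>r=1..k. \<Sum>j=1..n. \<Sum>u=0..m. \<theta> * (of_nat ((k - 1) choose (r - 1)) *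
      (of_nat (n choose j) * fact (j - 1) * falling (a j) r * (\<theta> ^ u * moment_coeff a \<theta> (n - j) (k - r) u))))"
    by (subst sum.swap) (subst (2) sum.swap, rule refl)
  also have "\<dots> = (\<Sum>r=1..k. \<Sum>j=1..n. \<theta> * (of_nat ((k - 1) choose (r - 1)) *
      (of_nat (n choose j) * fact (j - 1) * falling (a j) r * closed_moment a \<theta> (n - j) (k - r))))"
  proof (intro sum.cong refl)
    fix r j assume "r \<in> {1..k}"
    then have "(\<Sum>u=0..m. \<theta> ^ u * moment_coeff a \<theta> (n - j) (k - r) u) = closed_moment a \<theta> (n - j) (k - r)"
      using m by (intro closed_moment_eq_sum) auto
    then show "(\<Sum>u=0..m. \<theta> * (of_nat ((k - 1) choose (r - 1)) *
        (of_nat (n choose j) * fact (j - 1) * falling (a j) r * (\<theta> ^ u * moment_coeff a \<theta> (n - j) (k - r) u)))) =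
        \<theta> * (of_nat ((k - 1) choose (r - 1)) *
        (of_nat (n choose j) * fact (j - 1) * falling (a j) r * closed_moment a \<theta> (n - j) (k - r)))"
      by (simp add: sum_distrib_left[symmetric])
  qed
  finally show ?thesis by (simp add: sum_distrib_left)
qed

lemma cycle_moment_eq_closed_moment:
  "finite S \<Longrightarrow> cycle_moment a \<theta> S k = closed_moment a \<theta> (card S) k"
proof (induction k arbitrary: S rule: less_induct)
  case (less k)
  show ?case
  proof (cases "k = 0")
    case True
    then show ?thesis using less.prems by (simp add: cycle_moment_0 closed_moment_0)
  next
    case False
    then have k: "k \<ge> 1" by simp
    define n where "n = card S"
    have "cycle_moment a \<theta> S k = \<theta> * (\<Sum>r=1..k. of_nat ((k - 1) choose (r - 1)) *
        (\<Sum>c | c \<subseteq> S \<and> c \<noteq> {}. fact (card c - 1) * falling (a (card c)) r *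
           closed_moment a \<theta> (n - card c) (k - r)))"
      unfolding cycle_moment_rec[OF less.prems k]
    proof (intro sum.cong refl arg_cong2[where f = "(*)"])
      fix r c assume "r \<in> {1..k}" "c \<in> {c. c \<subseteq> S \<and> c \<noteq> {}}"
      then have "k - r < k" "c \<subseteq> S" "finite c" using k less.prems finite_subset by auto
      then show "cycle_moment a \<theta> (S - c) (k - r) = closed_moment a \<theta> (n - card c) (k - r)"
        using less.IH less.prems by (simp add: n_def card_Diff_subset)
    qed
    also have "\<dots> = \<theta> * (\<Sum>r=1..k. of_nat ((k - 1) choose (r - 1)) * (\<Sum>j=1..n.
        of_nat (n choose j) * (fact (j - 1) * falling (a j) r * closed_moment a \<theta> (n - j) (k - r))))"
    proof (intro arg_cong2[where f = "(*)"] refl sum.cong[OF refl])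
      fix r
      show "(\<Sum>c | c \<subseteq> S \<and> c \<noteq> {}. fact (card c - 1) * falling (a (card c)) r *
            closed_moment a \<theta> (n - card c) (k - r)) = (\<Sum>j=1..n.
          of_nat (n choose j) * (fact (j - 1) * falling (a j) r * closed_moment a \<theta> (n - j) (k - r)))"
        unfolding n_def by (rule sum_nonempty_subsets_card[OF less.prems,
            of "\<lambda>j. fact (j - 1) * falling (a j) r * closed_moment a \<theta> (card S - j) (k - r)"])
    qed
    also have "\<dots> = closed_moment a \<theta> n k"
      by (simp add: closed_moment_rec[OF k] mult_ac)
    finally show ?thesis by (simp add: n_def)
  qed
qed

lemma cycles_of_eq_orbits: "cycles_of n \<sigma> = orbits {1..n} \<sigma>"
  by (simp add: cycles_of_def orbits_def)

lemma sum_kcyc_eq_sum_orbits: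
  assumes "\<sigma> permutes {1..n}"
  shows "(\<Sum>j=1..n. a j * real (kcyc n j \<sigma>)) = (\<Sum>c\<in>orbits {1..n} \<sigma>. a (card c))"
proof -
  have "card c \<in> {1..n}" if "c \<in> orbits {1..n} \<sigma>" for c
  proof -
    have "c \<subseteq> {1..n}" "c \<noteq> {}"
      using orbits_subset[OF _ assms that] orbits_nonempty[OF _ assms that] by auto
    then show ?thesis
      using card_mono[of "{1..n}" c] by (auto simp: Suc_le_eq card_gt_0_iff finite_subset)
  qed
  then have "(\<Sum>c\<in>orbits {1..n} \<sigma>. a (card c)) =
      (\<Sum>j=1..n. \<Sum>c\<in>{c \<in> orbits {1..n} \<sigma>. card c = j}. a (card c))"
    by (intro sum.group[symmetric]) (auto simp: finite_orbits)
  also have "\<dots> = (\<Sum>j=1..n. a j * real (kcyc n j \<sigma>))"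
    by (intro sum.cong refl) (simp add: kcyc_def cycles_of_eq_orbits mult.commute)
  finally show ?thesis ..
qed

lemma closed_moment_div_pochhammer:
  assumes "\<theta> > 0" "k \<ge> 1"
  shows "closed_moment a \<theta> n k / pochhammer \<theta> n =
    (\<Sum>u=1..k. \<theta> ^ u *
      (\<Sum>r\<in>{r \<in> {1..u} \<rightarrow>\<^sub>E {1..k}. (\<Sum>i=1..u. r i) = k}.
         (\<Prod>i=1..u. (k - (\<Sum>l=1..<i. r l) - 1) choose (r i - 1)) *
         (\<Sum>J\<in>{J \<in> {1..u} \<rightarrow>\<^sub>E {1..n}. (\<Sum>i=1..u. J i) \<le> n}.
            (\<Prod>i=1..u. falling (a (J i)) (r i)) / (\<Prod>i=1..u. real (J i))
            * psi \<theta> n (n - (\<Sum>i=1..u. J i)))))"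
proof -
  have "pochhammer \<theta> n \<noteq> 0" using pochhammer_pos[OF assms(1), of n] by linarith
  then have weight: "tuple_weight a \<theta> n u r J / pochhammer \<theta> n =
      (\<Prod>i=1..u. falling (a (J i)) (r i)) / (\<Prod>i=1..u. real (J i)) * psi \<theta> n (n - (\<Sum>i=1..u. J i))"
    for u r J by (simp add: tuple_weight_def psi_def mult_ac)
  have "closed_moment a \<theta> n k / pochhammer \<theta> n =
      (\<Sum>u=1..k. \<theta> ^ u * (moment_coeff a \<theta> n k u / pochhammer \<theta> n))"
    using assms(2) sum.atLeast_Suc_atMost[of 0 k "\<lambda>u. \<theta> ^ u * moment_coeff a \<theta> n k u"]
    by (simp add: closed_moment_def moment_coeff_0 sum_divide_distrib)
  then show ?thesis
    unfolding moment_coeff_def sum_divide_distrib times_divide_eq_right[symmetric] weight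
      compositions_def length_tuples_def composition_coeff_def .
qed

theorem lemma2:
  fixes \<theta> :: real and n k :: nat and a :: "nat \<Rightarrow> real" and h :: "(nat \<Rightarrow> nat) \<Rightarrow> real"
  assumes "\<theta> > 0"
    and "k \<ge> 1"
    and "\<And>\<sigma>. h \<sigma> = (\<Sum>j=1..n. a j * real (kcyc n j \<sigma>))"
  shows "ewens_E \<theta> n (\<lambda>\<sigma>. falling (h \<sigma>) k) =
    (\<Sum>u=1..k. \<theta> ^ u *
      (\<Sum>r\<in>{r \<in> {1..u} \<rightarrow>\<^sub>E {1..k}. (\<Sum>i=1..u. r i) = k}.
         (\<Prod>i=1..u. (k - (\<Sum>l=1..<i. r l) - 1) choose (r i - 1)) *
         (\<Sum>J\<in>{J \<in> {1..u} \<rightarrow>\<^sub>E {1..n}. (\<Sum>i=1..u. J i) \<le> n}.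
            (\<Prod>i=1..u. falling (a (J i)) (r i)) / (\<Prod>i=1..u. real (J i))
            * psi \<theta> n (n - (\<Sum>i=1..u. J i)))))"
proof -
  have "ewens_E \<theta> n (\<lambda>\<sigma>. falling (h \<sigma>) k) = cycle_moment a \<theta> {1..n} k / pochhammer \<theta> n"
    unfolding ewens_E_def cycle_moment_def Sn_def wcyc_def cycles_of_eq_orbits assms(3)
    by (intro arg_cong2[where f = "(/)"] sum.cong refl) (simp add: sum_kcyc_eq_sum_orbits[simplified])
  also have "\<dots> = closed_moment a \<theta> n k / pochhammer \<theta> n"
    by (simp add: cycle_moment_eq_closed_moment)
  finally show ?thesis
    using closed_moment_div_pochhammer[OF assms(1,2)] by simp
qed

end
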